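(* Let $P$ be an instance of $k$-means clustering with $z$ outliers, let $S$ be a finite multiset of points of $P$, let $k'\ge0$ be such that $|S\setminus P_{opt}|\le k'$, and let $H$ be a set of $k+k'$ centers in $\mathbb{R}^D$ with $Cost(S,H)\le c\cdot W$ for some $c\ge1$, where $W$ is the minimum of $Cost(S,H')$ over all sets $H'$ of $k+k'$ points in $\mathbb{R}^D$. Let $S_{opt}=S\cap P_{opt}$. Then $Cost(\tilde S_{opt},H)\le(2+2c)\,Cost(S_{opt},O^* )$.
   Context: $P\subset\mathbb{R}^D$, $|P|=n$, $0<z<n$. $dist(p,H)=\min_{q\in H}\|p-q\|$; $Cost(X,Y)=\sum_{q\in X}dist(q,Y)^2$ (with multiplicity). $P_{opt}\subset P$ with $|P_{opt}|=n-z$ is the set of inliers of an optimal solution of $k$-means with $z$ outliers, $C^*_1,\dots,C^*_k$ the optimal clusters forming $P_{opt}$, $o^*_j$ the mean of $C^*_j$, $O^*=\{o^*_1,\dots,o^*_k\}$. Star shaped transformation: for $p\in C^*_j$, $\tilde p=o^*_j$; for $U\subseteq P_{opt}$ (multiset), $\tilde U$ is the multiset $\{\tilde p:p\in U\}$. *)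

theory Defs
  imports "HOL-Analysis.Analysis" "HOL-Library.Multiset"
begin

definition cost :: "'a::euclidean_space multiset \<Rightarrow> 'a set \<Rightarrow> real" where
  "cost X Y = (\<Sum>q \<in># X. (infdist q Y)\<^sup>2)"

definition centroid :: "'a::euclidean_space set \<Rightarrow> 'a" where
  "centroid A = (1 / real (card A)) *\<^sub>R (\<Sum>p\<in>A. p)"

definition cluster :: "'a set \<Rightarrow> ('a \<Rightarrow> nat) \<Rightarrow> nat \<Rightarrow> 'a set" where
  "cluster Popt \<sigma> j = {p \<in> Popt. \<sigma> p = j}"

definition opt_centers :: "nat \<Rightarrow> 'a::euclidean_space set \<Rightarrow> ('a \<Rightarrow> nat) \<Rightarrow> 'a set" where
  "opt_centers k Popt \<sigma> = (\<lambda>j. centroid (cluster Popt \<sigma> j)) ` {..<k}"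

definition star :: "'a::euclidean_space set \<Rightarrow> ('a \<Rightarrow> nat) \<Rightarrow> 'a \<Rightarrow> 'a" where
  "star Popt \<sigma> p = centroid (cluster Popt \<sigma> (\<sigma> p))"

definition kmeans_outliers_opt ::
  "'a::euclidean_space set \<Rightarrow> nat \<Rightarrow> nat \<Rightarrow> 'a set \<Rightarrow> ('a \<Rightarrow> nat) \<Rightarrow> bool" where
  "kmeans_outliers_opt P k z Popt \<sigma> \<longleftrightarrow>
     Popt \<subseteq> P \<and> card Popt = card P - z \<and>
     (\<forall>p\<in>Popt. \<sigma> p < k) \<and>
     (\<forall>j<k. cluster Popt \<sigma> j \<noteq> {}) \<and>
     (\<forall>p\<in>Popt. dist p (star Popt \<sigma> p) = infdist p (opt_centers k Popt \<sigma>)) \<and>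
     (\<forall>Q H. Q \<subseteq> P \<and> card Q = card P - z \<and> finite H \<and> H \<noteq> {} \<and> card H \<le> k \<longrightarrow>
        cost (mset_set Popt) (opt_centers k Popt \<sigma>) \<le> cost (mset_set Q) H)"

end

theory Submission
  imports Defs
begin

text \<open>Moving an inlier p to its optimal mean o with |p - o| = dist(p, O*) changes its distance
  to H by at most dist(p, O*), so (a + b)^2 \<le> 2 a^2 + 2 b^2 bounds the moved cost by
  2 Cost(S_opt, O*) + 2 Cost(S_opt, H). The second term is at most Cost(S, H) \<le> c W, and
  W \<le> Cost(S_opt, O*) because O* together with the at most k' outliers of S is a set of at most
  k + k' centers at which S costs at most Cost(S_opt, O*).\<close>

lemma infinite_UNIV_perfect_t1: "infinite (UNIV :: 'a::{perfect_space,t1_space} set)"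
proof
  fix x :: 'a
  assume "finite (UNIV :: 'a set)"
  then have "closed (- {x})" by (simp add: finite_imp_closed)
  then show False using not_open_singleton[of x] by (simp add: closed_def)
qed

lemma card_set_mset_le_size: "card (set_mset M) \<le> size M"
  using size_mset_mono[OF mset_set_set_mset_msubset, of M] by simp

lemma finite_superset_with_card:
  fixes A :: "'a set"
  assumes "infinite (UNIV :: 'a set)" and "finite A" and "card A \<le> m"
  obtains B where "A \<subseteq> B" and "finite B" and "card B = m"
proof -
  obtain C where "finite C" and "card C = m - card A" and "A \<inter> C = {}"
    using finite_arbitrarily_large_disj[OF assms(1,2)] by blast
  then show ?thesis
    using that[of "A \<union> C"] assms(2,3) by (simp add: card_Un_disjoint)
qed

lemma infdist_power2_le:
  "(infdist y A)\<^sup>2 \<le> 2 * (infdist x A)\<^sup>2 + 2 * (dist x y)\<^sup>2"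
proof -
  have "infdist y A \<le> infdist x A + dist x y"
    using infdist_triangle[of y A x] by (simp add: dist_commute)
  then have "(infdist y A)\<^sup>2 \<le> (infdist x A + dist x y)\<^sup>2"
    by (simp add: power_mono infdist_nonneg)
  also have "\<dots> \<le> 2 * (infdist x A)\<^sup>2 + 2 * (dist x y)\<^sup>2"
    using zero_le_power2[of "infdist x A - dist x y"]
    unfolding power2_sum power2_diff by linarith
  finally show ?thesis .
qed

lemma cost_nonneg: "0 \<le> cost X Y"
  unfolding cost_def by (induction X) auto

lemma cost_union: "cost (X + Z) Y = cost X Y + cost Z Y"
  unfolding cost_def by simp

lemma cost_image_mset: "cost (image_mset f X) Y = (\<Sum>x\<in>#X. (infdist (f x) Y)\<^sup>2)"
  unfolding cost_def by (simp add: image_mset.compositionality comp_def)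

lemma cost_eq_0_if_subset: "set_mset X \<subseteq> Y \<Longrightarrow> cost X Y = 0"
  unfolding cost_def by (induction X) auto

lemma cost_antimono:
  assumes "Y \<subseteq> Y'" and "Y \<noteq> {}"
  shows "cost X Y' \<le> cost X Y"
  unfolding cost_def
  by (intro sum_mset_mono power_mono infdist_mono infdist_nonneg assms)

lemma cost_image_mset_le:
  "cost (image_mset f X) Y \<le> 2 * cost X Y + 2 * (\<Sum>x\<in>#X. (dist x (f x))\<^sup>2)"
proof -
  have "cost (image_mset f X) Y \<le> (\<Sum>x\<in>#X. 2 * (infdist x Y)\<^sup>2 + 2 * (dist x (f x))\<^sup>2)"
    unfolding cost_image_mset by (intro sum_mset_mono infdist_power2_le)
  then show ?thesis
    unfolding cost_def by (simp add: sum_mset.distrib sum_mset_distrib_left)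
qed

lemma cost_union_centers_le:
  assumes "Y \<noteq> {}"
  shows "cost (X + Z) (Y \<union> set_mset Z) \<le> cost X Y"
  using cost_antimono[OF Un_upper1 assms, of X "set_mset Z"]
  by (simp add: cost_union cost_eq_0_if_subset)

lemma Inf_cost_le_cost:
  fixes A :: "'a::euclidean_space set"
  assumes "finite A" and "A \<noteq> {}" and "card A \<le> m"
  shows "Inf {cost S H | H. finite H \<and> card H = m} \<le> cost S A"
proof -
  obtain B where "A \<subseteq> B" and "finite B" and "card B = m"
    using finite_superset_with_card[OF infinite_UNIV_perfect_t1 assms(1,3)] .
  then have "Inf {cost S H | H. finite H \<and> card H = m} \<le> cost S B"
    by (intro cInf_lower bdd_belowI[where m = 0]) (auto simp: cost_nonneg)
  also have "\<dots> \<le> cost S A"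
    using cost_antimono[OF \<open>A \<subseteq> B\<close> assms(2)] .
  finally show ?thesis .
qed

lemma opt_centers_finite_card_le:
  "finite (opt_centers k Popt \<sigma>)" "card (opt_centers k Popt \<sigma>) \<le> k"
  unfolding opt_centers_def using card_image_le[of "{..<k}"] by auto

lemma opt_centers_nonempty:
  assumes "kmeans_outliers_opt P k z Popt \<sigma>" and "finite P" and "z < card P"
  shows "opt_centers k Popt \<sigma> \<noteq> {}"
proof -
  have "card Popt > 0"
    using assms unfolding kmeans_outliers_opt_def by simp
  then obtain p where "p \<in> Popt"
    by (metis card.empty equals0I less_irrefl)
  then have "0 < k"
    using assms(1) unfolding kmeans_outliers_opt_def by fastforce
  then show ?thesis
    unfolding opt_centers_def by blast
qed

lemma cost_image_star_le:
  assumes "kmeans_outliers_opt P k z Popt \<sigma>" and "set_mset X \<subseteq> Popt"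
  shows "cost (image_mset (star Popt \<sigma>) X) Y
           \<le> 2 * cost X Y + 2 * cost X (opt_centers k Popt \<sigma>)"
proof -
  have "(\<Sum>p\<in>#X. (dist p (star Popt \<sigma> p))\<^sup>2) = cost X (opt_centers k Popt \<sigma>)"
    unfolding cost_def using assms unfolding kmeans_outliers_opt_def
    by (intro arg_cong[where f = sum_mset] image_mset_cong) auto
  then show ?thesis
    using cost_image_mset_le[of "star Popt \<sigma>" X Y] by simp
qed

theorem lemma6:
  fixes P :: "'a::euclidean_space set" and k z k' :: nat
    and Popt :: "'a set" and \<sigma> :: "'a \<Rightarrow> nat"
    and S :: "'a multiset" and H :: "'a set" and c :: real
  assumes "finite P" and "0 < z" and "z < card P"
    and "kmeans_outliers_opt P k z Popt \<sigma>"
    and "set_mset S \<subseteq> P"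
    and "size (filter_mset (\<lambda>p. p \<notin> Popt) S) \<le> k'"
    and "finite H" and "card H = k + k'"
    and "c \<ge> 1"
    and "cost S H \<le> c * Inf {cost S H' | H'. finite H' \<and> card H' = k + k'}"
  shows "cost (image_mset (star Popt \<sigma>) (filter_mset (\<lambda>p. p \<in> Popt) S)) H
           \<le> (2 + 2 * c) * cost (filter_mset (\<lambda>p. p \<in> Popt) S) (opt_centers k Popt \<sigma>)"
proof -
  define Sopt where "Sopt = filter_mset (\<lambda>p. p \<in> Popt) S"
  define Sout where "Sout = filter_mset (\<lambda>p. p \<notin> Popt) S"
  define Ostar where "Ostar = opt_centers k Popt \<sigma>"
  have S_split: "S = Sopt + Sout"
    unfolding Sopt_def Sout_def by simp
  have Ostar_nonempty: "Ostar \<noteq> {}"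
    unfolding Ostar_def using opt_centers_nonempty[OF assms(4,1,3)] .
  have "card (Ostar \<union> set_mset Sout) \<le> k + k'"
    using card_Un_le[of Ostar "set_mset Sout"] opt_centers_finite_card_le(2)[of k Popt \<sigma>]
      card_set_mset_le_size[of Sout] assms(6)
    unfolding Ostar_def Sout_def by linarith
  then have "Inf {cost S H' | H'. finite H' \<and> card H' = k + k'} \<le> cost S (Ostar \<union> set_mset Sout)"
    using Ostar_nonempty opt_centers_finite_card_le(1) unfolding Ostar_def
    by (intro Inf_cost_le_cost) auto
  also have "\<dots> \<le> cost Sopt Ostar"
    unfolding S_split using cost_union_centers_le[OF Ostar_nonempty] .
  finally have "c * Inf {cost S H' | H'. finite H' \<and> card H' = k + k'} \<le> c * cost Sopt Ostar"
    using assms(9) by (simp add: mult_left_mono)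
  moreover have "cost Sopt H \<le> cost S H"
    unfolding S_split cost_union using cost_nonneg[of Sout H] by simp
  ultimately have "cost Sopt H \<le> c * cost Sopt Ostar"
    using assms(10) by linarith
  moreover have "cost (image_mset (star Popt \<sigma>) Sopt) H \<le> 2 * cost Sopt H + 2 * cost Sopt Ostar"
    unfolding Ostar_def Sopt_def by (rule cost_image_star_le[OF assms(4)]) auto
  ultimately show ?thesis
    unfolding Sopt_def Ostar_def by (simp add: algebra_simps)
qed

end
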